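(* For all integers $n,k,r$ with $0\le k\le n-2$ and $1\le r\le n$, $$\frac{k+1}{n-k-1}\sum_i\binom{k}{i}\binom{n-k+i-1}{r}\binom{n-i-1}{n-r}=\frac{k+1}{r}\sum_j(-1)^j\frac{\binom{k}{j}\binom{k-j}{j}\binom{n-j-2}{r-1}\binom{n-j-1}{r-j-1}}{\binom{n-j-2}{j}},$$ where the left sum is over integers $0\le i\le k$ and the right sum over integers $0\le j\le k/2$.
   Context: Binomial coefficients $\binom{a}{b}$ with $a\ge 0$ are $0$ if $b<0$ or $b>a$. *)

theory Defs
  imports Complex_Main
begin

text \<open>Binomial coefficient with integer arguments, following the paper's convention:
  for a \<ge> 0, binom a b = 0 if b < 0 or b > a. (For a < 0 it is set to 0; this
  case never arises in the statement.)\<close>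
definition ibinom :: "int \<Rightarrow> int \<Rightarrow> real" where
  "ibinom a b = (if a < 0 \<or> b < 0 \<or> b > a then 0 else real (nat a choose nat b))"

end

theory Submission
  imports Defs
begin

(* Reading C(n-i-1, n-r) = C(n-i-1, r-1-i) as the i-th finite difference of u \<mapsto> C(n-1-u, r-1)
   and regrouping turns the left-hand sum into \<Sum>t C(k,t) D(t), where
   D(t) = \<Sum>s (-1)^(t-s) C(t,s) C(n-1-s, r) C(n-1-t+s, r-1).
   The reflection s \<mapsto> t-s shows that r D(2j) and 2 D(2j+1) are elementary multiples of the
   well-poised sum S(M,b,a) = \<Sum>s (-1)^s C(2a,s) C(M-s,b) C(M-2a+s,b), taken at (n-1, r-1, j) and
   (n, r, j+1) respectively. S has a Dixon-type closed form, proved by creative telescoping in a.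
   The closed forms give r D(2j) = (n-1-2j) c(j) and r D(2j+1) = -(2j+1) c(j), where c(j) is the
   right-hand summand without its factor C(k,2j); since
   (n-1-2j) C(k,2j) - (2j+1) C(k,2j+1) = (n-1-k) C(k,2j), pairing t = 2j with t = 2j+1 gives
   r \<Sum>t C(k,t) D(t) = (n-1-k) \<Sum>j C(k,2j) c(j), which is the claim. *)

lemma gbinomial_Suc_absorb:
  "of_nat (Suc k) * (a gchoose Suc k) = (a - of_nat k) * (a gchoose k)"
  using gbinomial_mult_1'[of a k] by (simp add: algebra_simps)

lemma of_nat_choose_Suc_absorb:
  "real (Suc k) * real (m choose Suc k) = (real m - real k) * real (m choose k)"
  using gbinomial_Suc_absorb[of k "real m"] by (simp add: binomial_gbinomial)

lemma minus_one_power_diff: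
  "s \<le> m \<Longrightarrow> (-1::'a::ring_1) ^ (m - s) = (-1) ^ m * (-1) ^ s"
  by (simp flip: neg_one_power_add_eq_neg_one_power_diff add: power_add)

lemma sum_atMost_reflect: "(\<Sum>s\<le>m. f (m - s)) = (\<Sum>s\<le>(m::nat). f s)"
  using sum.atLeastAtMost_rev[of f 0 m] by (simp add: atMost_atLeast0)

lemma sum_atMost_reflect_cong:
  assumes "\<And>s. s \<le> m \<Longrightarrow> g (m - s) = h s"
  shows "(\<Sum>s\<le>(m::nat). g s) = (\<Sum>s\<le>m. h s)"
  by (metis (no_types, lifting) assms atMost_iff sum.cong sum_atMost_reflect)

lemma sum_atMost_Suc_choose_pascal:
  "(\<Sum>s\<le>Suc m. of_nat (Suc m choose s) * f s)
     = (\<Sum>s\<le>m. of_nat (m choose s) * (f s + f (Suc s)) :: 'a::comm_semiring_1)"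
proof -
  have "(\<Sum>s\<le>Suc m. of_nat (Suc m choose s) * f s)
      = (f 0 + (\<Sum>s\<le>m. of_nat (m choose Suc s) * f (Suc s))) + (\<Sum>s\<le>m. of_nat (m choose s) * f (Suc s))"
    by (simp only: sum.atMost_Suc_shift) (simp add: sum.distrib algebra_simps)
  also have "f 0 + (\<Sum>s\<le>m. of_nat (m choose Suc s) * f (Suc s)) = (\<Sum>s\<le>Suc m. of_nat (m choose s) * f s)"
    by (simp only: sum.atMost_Suc_shift) simp
  also have "\<dots> = (\<Sum>s\<le>m. of_nat (m choose s) * f s)"
    by (simp add: binomial_eq_0)
  finally show ?thesis
    by (simp add: sum.distrib distrib_left)
qed

lemma sum_atMost_reflect_neg_eq_0:
  assumes "\<And>s. s \<le> m \<Longrightarrow> f (m - s) = - f s"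
  shows "(\<Sum>s\<le>(m::nat). f s) = (0::'a::linordered_idom)"
proof -
  have "(\<Sum>s\<le>m. f s) = (\<Sum>s\<le>m. - f s)"
    by (rule sum_atMost_reflect_cong) (use assms in simp)
  then show ?thesis
    by (simp add: sum_negf)
qed

definition dixon_term :: "nat \<Rightarrow> nat \<Rightarrow> nat \<Rightarrow> nat \<Rightarrow> real" where
  "dixon_term M b a s = (-1)^s * real (2*a choose s) * ((real M - real s) gchoose b)
      * ((real M - 2*real a + real s) gchoose b)"

definition dixon_sum :: "nat \<Rightarrow> nat \<Rightarrow> nat \<Rightarrow> real" where
  "dixon_sum M b a = (\<Sum>s\<le>2*a. dixon_term M b a s)"

definition dixon_closed :: "nat \<Rightarrow> nat \<Rightarrow> nat \<Rightarrow> real" where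
  "dixon_closed M b a = (if a \<le> b \<and> a + b \<le> M then (-1)^a * fact (2*a) * fact (M-2*a) * fact (M-a)
      / (fact a * fact (b-a) * fact (M-b-a) * fact b * fact (M-b)) else 0)"

definition dixon_lead :: "nat \<Rightarrow> nat \<Rightarrow> real" where
  "dixon_lead M a = (real M - 2*real a) * (real M - 2*real a - 1) * (real M - real a)"

definition dixon_trail :: "nat \<Rightarrow> nat \<Rightarrow> nat \<Rightarrow> real" where
  "dixon_trail M b a = 2 * (2*real a + 1) * (real b - real a) * (real M - real b - real a)"

text \<open>Certificate for the recurrence of \<open>dixon_sum M b\<close> in \<open>a\<close>: \<open>G s = dixon_cert M b a s\<close>,
  a hypergeometric term times this cubic in \<open>s\<close>, satisfies
  \<open>dixon_lead M a * dixon_term M b (a+1) s + dixon_trail M b a * dixon_term M b a s = G s - G (s-1)\<close>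
  with \<open>G (-1) = 0\<close>, and \<open>G (2a+2) = 0\<close>.\<close>

definition dixon_cert_poly :: "real \<Rightarrow> real \<Rightarrow> real \<Rightarrow> real \<Rightarrow> real" where
  "dixon_cert_poly M b a s =
     (2*a+8*a^2+8*a^3+2*b+10*b*a+10*b*a^2-2*M-9*M*a-6*M*a^2+8*M*a^3-2*M*b+3*M*b*a+10*M*b*a^2
      +M^2-4*M^2*a-14*M^2*a^2-3*M^2*b-7*M^2*b*a+2*M^3+7*M^3*a+M^3*b-M^4)
   + (-5*a-14*a^2-8*a^3-5*b-16*b*a-10*b*a^2+5*M+16*M*a+8*M*a^2+3*M*b+M*b*a-2*M^2+M^2*a+M^2*b-M^3)*s
   + (4*a+6*a^2+4*b+6*b*a-4*M-7*M*a-M*b+M^2)*s^2 + (-a-b+M)*s^3"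

definition dixon_cert :: "nat \<Rightarrow> nat \<Rightarrow> nat \<Rightarrow> nat \<Rightarrow> real" where
  "dixon_cert M b a s = -((-1)^s * real (2*a+1 choose s) * ((real M - real s - 1) gchoose b)
      * ((real M - 2*real a - 1 + real s) gchoose (b-1))
      * dixon_cert_poly (real M) (real b) (real a) (real s + 1) / real b)"

lemma dixon_cert_poly_identity:
  fixes a K M b :: real
  shows "- (M-2*a)*(M-2*a-1)*(M-a)*(2*a+2)*(2*a+1)*(M-K-1)*(M-2*a-1+K-(b-1))*(M-2*a+K-(b-1))
         - 2*(2*a+1)*(b-a)*(M-b-a)*(2*a-K)*(2*a+1-K)*(M-K-1)*(M-2*a+1+K)*(M-2*a+K)
   = (2*a+1-K)*(2*a+1)*(M-K-2-(b-1))*(M-2*a+K)*dixon_cert_poly M b a (K+2)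
     + (K+1)*(2*a+1)*(M-K-1)*(M-2*a+K-(b-1))*dixon_cert_poly M b a (K+1)"
  unfolding dixon_cert_poly_def by algebra

text \<open>In one telescoping step every binomial coefficient is, by absorption, a rational multiple
  of one of \<open>u = C(2a+1, K)\<close>, \<open>v = C(M-K-2, b-1)\<close> and \<open>w = C(M-2a+K, b-1)\<close>; the
  hypotheses record these ratios, and clearing denominators leaves the polynomial identity
  above times \<open>u v w\<close>.\<close>

lemma dixon_cert_step_algebra:
  fixes a K M b u v w cA cB cC xb x1b yb0 yb y2b :: real
  assumes K: "K \<ge> 0" and a: "a \<ge> 0" and b: "b > 0" and y1: "M - 2*a + K > 0"
  and hA: "(K+1)*cA = (2*a+2)*u"
  and hB: "(K+1)*cB = (2*a+1-K)*u"
  and hC: "(2*a+1)*cC = (2*a-K)*cB"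
  and hxb: "b*xb = (M-K-2 - (b-1))*v"
  and hx1b: "b*x1b = (M-K-1)*v"
  and hyb0: "(M-2*a+K)*yb0 = (M-2*a+K-(b-1))*w"
  and hyb: "b*yb = (M-2*a-1+K-(b-1))*yb0"
  and hy2b: "b*y2b = (M-2*a+1+K)*w"
  shows "(M-2*a)*(M-2*a-1)*(M-a)*(-(cA*x1b*yb)) + 2*(2*a+1)*(b-a)*(M-b-a)*(-(cC*x1b*y2b))
     = cB*xb*w*dixon_cert_poly M b a (K+2)/b + u*x1b*yb0*dixon_cert_poly M b a (K+1)/b"
proof -
  define D where "D = (K+1)*(2*a+1)*b^2*(M-2*a+K)"
  have D0: "D \<noteq> 0" using K a b y1 unfolding D_def by auto
  have T1: "D*(cA*x1b*yb) = (2*a+1)*((2*a+2)*u)*((M-K-1)*v)*((M-2*a-1+K-(b-1))*((M-2*a+K-(b-1))*w))"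
  proof -
    have "D*(cA*x1b*yb) = (2*a+1)*((K+1)*cA)*(b*x1b)*((M-2*a-1+K-(b-1))*((M-2*a+K)*yb0))"
      unfolding D_def using hyb[symmetric] by (simp add: power2_eq_square mult_ac)
    then show ?thesis using hA hx1b hyb0 by simp
  qed
  have T2: "D*(cC*x1b*y2b) = (2*a-K)*((2*a+1-K)*u)*((M-K-1)*v)*((M-2*a+1+K)*w)*(M-2*a+K)"
  proof -
    have "D*(cC*x1b*y2b) = (2*a-K)*((K+1)*cB)*(b*x1b)*(b*y2b)*(M-2*a+K)"
      unfolding D_def using hC[symmetric] by (simp add: power2_eq_square mult_ac)
    then show ?thesis using hB hx1b hy2b by simp
  qed
  have T3: "D*(cB*xb*w*dixon_cert_poly M b a (K+2)/b)
      = (2*a+1)*((2*a+1-K)*u)*((M-K-2 - (b-1))*v)*w*dixon_cert_poly M b a (K+2)*(M-2*a+K)"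
  proof -
    have "D*(cB*xb*w*dixon_cert_poly M b a (K+2)/b)
        = (2*a+1)*((K+1)*cB)*(b*xb)*w*dixon_cert_poly M b a (K+2)*(M-2*a+K)"
      unfolding D_def using b by (simp add: power2_eq_square field_simps)
    then show ?thesis using hB hxb by simp
  qed
  have T4: "D*(u*x1b*yb0*dixon_cert_poly M b a (K+1)/b)
      = (K+1)*(2*a+1)*u*((M-K-1)*v)*((M-2*a+K-(b-1))*w)*dixon_cert_poly M b a (K+1)"
  proof -
    have "D*(u*x1b*yb0*dixon_cert_poly M b a (K+1)/b)
        = (K+1)*(2*a+1)*u*(b*x1b)*((M-2*a+K)*yb0)*dixon_cert_poly M b a (K+1)"
      unfolding D_def using b by (simp add: power2_eq_square field_simps)
    then show ?thesis using hx1b hyb0 by simp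
  qed
  have "D*((M-2*a)*(M-2*a-1)*(M-a)*(-(cA*x1b*yb)) + 2*(2*a+1)*(b-a)*(M-b-a)*(-(cC*x1b*y2b)))
      = -(M-2*a)*(M-2*a-1)*(M-a)*(D*(cA*x1b*yb)) - 2*(2*a+1)*(b-a)*(M-b-a)*(D*(cC*x1b*y2b))"
    by algebra
  also have "\<dots> = u*v*w*(- (M-2*a)*(M-2*a-1)*(M-a)*(2*a+2)*(2*a+1)*(M-K-1)*(M-2*a-1+K-(b-1))*(M-2*a+K-(b-1))
       - 2*(2*a+1)*(b-a)*(M-b-a)*(2*a-K)*(2*a+1-K)*(M-K-1)*(M-2*a+1+K)*(M-2*a+K))"
    unfolding T1 T2 by algebra
  also have "\<dots> = u*v*w*((2*a+1-K)*(2*a+1)*(M-K-2-(b-1))*(M-2*a+K)*dixon_cert_poly M b a (K+2)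
       + (K+1)*(2*a+1)*(M-K-1)*(M-2*a+K-(b-1))*dixon_cert_poly M b a (K+1))"
    by (simp only: dixon_cert_poly_identity)
  also have "\<dots> = D*(cB*xb*w*dixon_cert_poly M b a (K+2)/b) + D*(u*x1b*yb0*dixon_cert_poly M b a (K+1)/b)"
    unfolding T3 T4 by algebra
  finally have "D*((M-2*a)*(M-2*a-1)*(M-a)*(-(cA*x1b*yb)) + 2*(2*a+1)*(b-a)*(M-b-a)*(-(cC*x1b*y2b)))
      = D*(cB*xb*w*dixon_cert_poly M b a (K+2)/b + u*x1b*yb0*dixon_cert_poly M b a (K+1)/b)"
    by (simp only: distrib_left)
  then show ?thesis
    using D0 by simp
qed

lemma dixon_cert_step:
  assumes "2*a+2 \<le> M" "b \<ge> 1"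
  shows "dixon_lead M a * dixon_term M b (Suc a) (Suc K) + dixon_trail M b a * dixon_term M b a (Suc K)
     = dixon_cert M b a (Suc K) - dixon_cert M b a K"
proof -
  obtain b0 where b0: "b = Suc b0" using assms(2) by (cases b) auto
  define x where "x = real M - real K - 2"
  define y where "y = real M - 2*real a - 1 + real K"
  define u where "u = real (2*a+1 choose K)"
  define cA where "cA = real (2*a+2 choose Suc K)"
  define cB where "cB = real (2*a+1 choose Suc K)"
  define cC where "cC = real (2*a choose Suc K)"
  define v where "v = x gchoose b0"
  define xb where "xb = x gchoose b"
  define x1b where "x1b = (x+1) gchoose b"
  define w where "w = (y+1) gchoose b0"
  define yb0 where "yb0 = y gchoose b0"
  define yb where "yb = y gchoose b"
  define y2b where "y2b = (y+2) gchoose b"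
  have hA: "(real K+1)*cA = (2*real a+2)*u"
  proof -
    have "real (Suc K * (Suc (2*a+1) choose Suc K)) = real (Suc (2*a+1) * (2*a+1 choose K))"
      using Suc_times_binomial[of K "2*a+1"] by (simp only:)
    then show ?thesis unfolding cA_def u_def by (simp add: algebra_simps)
  qed
  have hB: "(real K+1)*cB = (2*real a+1-real K)*u"
    using of_nat_choose_Suc_absorb[of K "2*a+1"] unfolding cB_def u_def by (simp add: add.commute)
  have hC: "(2*real a+1)*cC = (2*real a-real K)*cB"
    using gbinomial_absorb_comp[of "real (2*a+1)" "Suc K"] unfolding cB_def cC_def binomial_gbinomial
    by (simp add: algebra_simps)
  have hxb: "real b*xb = (real M-real K-2 - (real b-1))*v"
    using gbinomial_Suc_absorb[of b0 x] unfolding xb_def v_def x_def b0 by simp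
  have hx1b: "real b*x1b = (real M-real K-1)*v"
    using gbinomial_absorption[of b0 "x+1"] unfolding x1b_def v_def x_def b0 by (simp add: algebra_simps)
  have hyb0: "(real M-2*real a+real K)*yb0 = (real M-2*real a+real K-(real b-1))*w"
    using gbinomial_absorb_comp[of "y+1" b0] unfolding yb0_def w_def y_def b0 by (simp add: algebra_simps)
  have hyb: "real b*yb = (real M-2*real a-1+real K-(real b-1))*yb0"
    using gbinomial_Suc_absorb[of b0 y] unfolding yb_def yb0_def y_def b0 by simp
  have hy2b: "real b*y2b = (real M-2*real a+1+real K)*w"
    using gbinomial_absorption[of b0 "y+2"] unfolding y2b_def w_def y_def b0 by (simp add: algebra_simps)
  have pos: "real K \<ge> 0" "real a \<ge> 0" "real b > 0" "real M - 2*real a + real K > 0"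
    using assms by auto
  have e: "real M - real (Suc K) = x + 1" "real M - real K - 1 = x + 1"
    "real M - 2*real (Suc a) + real (Suc K) = y" "real M - 2*real a + real (Suc K) = y + 2"
    "real M - 2*real a - 1 + real (Suc K) = y + 1" "real (Suc K) + 1 = real K + 2"
    unfolding x_def y_def by simp_all
  have F: "dixon_term M b (Suc a) (Suc K) = -((-1)^K * (cA*x1b*yb))"
    "dixon_term M b a (Suc K) = -((-1)^K * (cC*x1b*y2b))"
    "dixon_cert M b a (Suc K) = (-1)^K * (cB*xb*w*dixon_cert_poly (real M) (real b) (real a) (real K+2)/real b)"
    "dixon_cert M b a K = -((-1)^K * (u*x1b*yb0*dixon_cert_poly (real M) (real b) (real a) (real K+1)/real b))"
    unfolding dixon_term_def dixon_cert_def e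
    unfolding cA_def cB_def cC_def u_def x1b_def xb_def yb_def y2b_def yb0_def w_def y_def b0
    by simp_all
  have scale: "p*(-(c*X)) + q*(-(c*Y)) = c*Z - (-(c*W))" if "p*(-X) + q*(-Y) = Z + W"
    for p q X Y Z W c :: real
    using arg_cong[where f="(*) c", OF that] by (simp add: algebra_simps)
  show ?thesis
    unfolding dixon_lead_def dixon_trail_def F
    by (rule scale[OF dixon_cert_step_algebra[OF pos hA hB hC hxb hx1b hyb0 hyb hy2b]])
qed

lemma dixon_cert_base_algebra:
  fixes M a b y v w :: real
  assumes "b \<noteq> 0" "y = M - 2*a - 1" "y \<noteq> 0"
  shows "(M-2*a)*(M-2*a-1)*(M-a) * ((M/b*v) * ((y-b)*(y+1-b)/(b*y)*w))
     + 2*(2*a+1)*(b-a)*(M-b-a) * ((M/b*v)*((y+1)/b*w)) = -((M-b)/b*v*w*dixon_cert_poly M b a 1/b)"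
  using assms unfolding dixon_cert_poly_def by (simp add: field_simps) algebra

lemma dixon_cert_base:
  assumes "2*a+2 \<le> M" "b \<ge> 1"
  shows "dixon_lead M a * dixon_term M b (Suc a) 0 + dixon_trail M b a * dixon_term M b a 0
     = dixon_cert M b a 0"
proof -
  obtain b0 where b0: "b = Suc b0" using assms(2) by (cases b) auto
  define y where "y = real M - 2*real a - 1"
  define v where "v = (real M - 1) gchoose b0"
  define w where "w = y gchoose b0"
  have y0: "y \<noteq> 0" and b_nz: "real b \<noteq> 0" unfolding y_def using assms by auto
  have "real b * (real M gchoose b) = real M * v"
    using gbinomial_absorption[of b0 "real M"] unfolding v_def b0 by simp
  then have top: "real M gchoose b = real M / real b * v"
    using b_nz by (simp add: field_simps)
  have "real b * ((real M - 1) gchoose b) = (real M - real b) * v"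
    using gbinomial_Suc_absorb[of b0 "real M - 1"] unfolding v_def b0 by simp
  then have top1: "(real M - 1) gchoose b = (real M - real b) / real b * v"
    using b_nz by (simp add: field_simps)
  have "real b * ((y + 1) gchoose b) = (y + 1) * w"
    using gbinomial_absorption[of b0 "y + 1"] unfolding w_def b0 by simp
  then have mid: "(y + 1) gchoose b = (y + 1) / real b * w"
    using b_nz by (simp add: field_simps)
  have "y * ((y - 1) gchoose b0) = (y + 1 - real b) * w"
    using gbinomial_absorb_comp[of y b0] unfolding w_def b0 by simp
  then have G: "(y - 1) gchoose b0 = (y + 1 - real b) / y * w"
    using y0 by (simp add: field_simps)
  have "real b * ((y - 1) gchoose b) = (y - real b) * ((y + 1 - real b) / y * w)"
    using gbinomial_Suc_absorb[of b0 "y - 1"] unfolding G b0 by simp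
  then have low: "(y - 1) gchoose b = (y - real b) * (y + 1 - real b) / (real b * y) * w"
    using b_nz y0 by (simp add: field_simps)
  have "real M - 2*real (Suc a) + real (0::nat) = y - 1" "real M - 2*real a + real (0::nat) = y + 1"
    "real M - real (0::nat) - 1 = real M - 1" "real M - 2*real a - 1 + real (0::nat) = y"
    "real M - real (0::nat) = real M" "real (0::nat) + 1 = 1"
    unfolding y_def by simp_all
  then have F: "dixon_term M b (Suc a) 0 = (real M / real b * v) * ((y - real b) * (y + 1 - real b) / (real b * y) * w)"
    "dixon_term M b a 0 = (real M / real b * v) * ((y + 1) / real b * w)"
    "dixon_cert M b a 0 = -((real M - real b) / real b * v * w * dixon_cert_poly (real M) (real b) (real a) 1 / real b)"
    unfolding dixon_term_def dixon_cert_def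
    by (simp_all only: top top1 mid low) (simp_all add: b0 w_def)
  show ?thesis
    unfolding dixon_lead_def dixon_trail_def F by (rule dixon_cert_base_algebra[OF b_nz y_def y0])
qed

lemma dixon_telescoping:
  assumes "2*a+2 \<le> M" "b \<ge> 1"
  shows "(\<Sum>s\<le>K. dixon_lead M a * dixon_term M b (Suc a) s + dixon_trail M b a * dixon_term M b a s)
       = dixon_cert M b a K"
proof (induction K)
  case 0
  then show ?case using dixon_cert_base[OF assms] by simp
next
  case (Suc K)
  then show ?case using dixon_cert_step[OF assms, of K] by simp
qed

lemma dixon_sum_recurrence:
  assumes "2*a+2 \<le> M" "b \<ge> 1"
  shows "dixon_lead M a * dixon_sum M b (Suc a) + dixon_trail M b a * dixon_sum M b a = 0"
proof -
  have "dixon_cert M b a (2*a+2) = 0"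
    unfolding dixon_cert_def by (simp add: binomial_eq_0 del: binomial_Suc_Suc)
  then have "(\<Sum>s\<le>2*a+2. dixon_lead M a * dixon_term M b (Suc a) s + dixon_trail M b a * dixon_term M b a s) = 0"
    using dixon_telescoping[OF assms, of "2*a+2"] by simp
  moreover have "dixon_sum M b (Suc a) = (\<Sum>s\<le>2*a+2. dixon_term M b (Suc a) s)"
    unfolding dixon_sum_def by simp
  moreover have "dixon_sum M b a = (\<Sum>s\<le>2*a+2. dixon_term M b a s)"
    unfolding dixon_sum_def
    by (rule sum.mono_neutral_left) (auto simp: dixon_term_def binomial_eq_0)
  ultimately show ?thesis
    by (simp only: sum.distrib flip: sum_distrib_left)
qed

lemma dixon_closed_recurrence:
  assumes "2*a+2 \<le> M"
  shows "dixon_lead M a * dixon_closed M b (Suc a) + dixon_trail M b a * dixon_closed M b a = 0"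
proof (cases "Suc a \<le> b \<and> Suc a + b \<le> M")
  case True
  then obtain p q where pq: "b = Suc a + p" "M = Suc a + b + q"
    by (metis le_add_diff_inverse)
  define c where "c = (-1)^a * fact (2*a) * fact (p+q) * fact (a+1+p+q)
      / (fact a * fact p * fact q * fact (a+1+p) * fact (a+1+q) :: real)"
  have "dixon_closed M b (Suc a) = (-1)^(Suc a) * fact (Suc (Suc (2*a))) * fact (p+q) * fact (a+1+p+q)
      / (fact (Suc a) * fact p * fact q * fact (a+1+p) * fact (a+1+q))"
    unfolding dixon_closed_def using True pq by (simp add: algebra_simps)
  also have "\<dots> = - 2 * (2*real a+1) * c"
    unfolding c_def fact_Suc[of "Suc (2*a)"] fact_Suc[of "2*a"] fact_Suc[of a]
    using of_nat_0_le_iff[of a] by (simp add: field_simps add_nonneg_eq_0_iff del: fact_Suc)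
  finally have up: "dixon_closed M b (Suc a) = - 2 * (2*real a+1) * c" .
  have "dixon_closed M b a = (-1)^a * fact (2*a) * fact (Suc (Suc (p+q))) * fact (Suc (a+1+p+q))
      / (fact a * fact (Suc p) * fact (Suc q) * fact (a+1+p) * fact (a+1+q))"
    unfolding dixon_closed_def using True pq by (simp add: algebra_simps)
  also have "\<dots> = (real p+real q+2)*(real p+real q+1)*(real a+2+real p+real q) / ((real p+1)*(real q+1)) * c"
    unfolding c_def fact_Suc[of "Suc (p+q)"] fact_Suc[of "p+q"] fact_Suc[of "a+1+p+q"] fact_Suc[of p] fact_Suc[of q]
    using of_nat_0_le_iff[of p] of_nat_0_le_iff[of q]
    by (simp add: field_simps add_nonneg_eq_0_iff del: fact_Suc)
  finally have down: "dixon_closed M b a = (real p+real q+2)*(real p+real q+1)*(real a+2+real p+real q) / ((real p+1)*(real q+1)) * c" .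
  have coeffs: "dixon_lead M a = (real p+real q+2)*(real p+real q+1)*(real a+2+real p+real q)"
    "dixon_trail M b a = 2*(2*real a+1)*(real p+1)*(real q+1)"
    unfolding dixon_lead_def dixon_trail_def using pq by (auto simp: algebra_simps)
  show ?thesis
    unfolding up down coeffs using of_nat_0_le_iff[of p] of_nat_0_le_iff[of q]
    by (simp add: field_simps add_nonneg_eq_0_iff)
next
  case False
  then have "dixon_closed M b (Suc a) = 0"
    unfolding dixon_closed_def by auto
  moreover have "dixon_trail M b a = 0 \<or> dixon_closed M b a = 0"
    using False unfolding dixon_closed_def dixon_trail_def by auto
  ultimately show ?thesis
    by auto
qed

lemma dixon_sum_closed_form:
  assumes "2*a \<le> M"
  shows "dixon_sum M b a = dixon_closed M b a"
proof (cases "b = 0")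
  case True
  then show ?thesis
    using choose_alternating_sum[of "2*a", where 'a=real]
    unfolding dixon_sum_def dixon_closed_def dixon_term_def by (cases "a = 0") simp_all
next
  case False
  then have b1: "b \<ge> 1" by simp
  show ?thesis
    using assms
  proof (induction a)
    case 0
    show ?case
      unfolding dixon_sum_def dixon_closed_def dixon_term_def
      by (simp add: binomial_gbinomial[symmetric] binomial_fact)
  next
    case (Suc a)
    then have IH: "dixon_sum M b a = dixon_closed M b a" and a2: "2*a+2 \<le> M"
      by simp_all
    have "dixon_lead M a \<noteq> 0"
      using a2 unfolding dixon_lead_def by auto
    moreover have "dixon_lead M a * dixon_sum M b (Suc a) = dixon_lead M a * dixon_closed M b (Suc a)"
      using dixon_sum_recurrence[OF a2 b1] dixon_closed_recurrence[OF a2, of b] unfolding IH by linarith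
    ultimately show ?case
      by simp
  qed
qed

lemma dixon_term_of_nat:
  assumes "s \<le> 2*a" "2*a \<le> M"
  shows "dixon_term M b a s
    = (-1)^s * real (2*a choose s) * real ((M-s) choose b) * real ((M-2*a+s) choose b)"
proof -
  have "real (M-s) = real M - real s" "real (M-2*a+s) = real M - 2*real a + real s"
    using assms by (simp_all add: of_nat_diff)
  then show ?thesis
    unfolding dixon_term_def by (simp only: binomial_gbinomial)
qed

definition cross_diff :: "nat \<Rightarrow> nat \<Rightarrow> nat \<Rightarrow> real" where
  "cross_diff n r t = (\<Sum>s\<le>t. (-1)^(t-s) * real (t choose s)
      * real ((n-1-s) choose r) * real ((n-1-t+s) choose (r-1)))"

lemma cross_diff_even:
  assumes "2*j + 2 \<le> n" "r \<ge> 1"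
  shows "real r * cross_diff n r (2*j) = (real n - real j - real r) * dixon_sum (n-1) (r-1) j"
proof -
  define F where "F = dixon_term (n-1) (r-1) j"
  have F: "F s = (-1)^s * real (2*j choose s) * real ((n-1-s) choose (r-1)) * real ((n-1-2*j+s) choose (r-1))"
    if "s \<le> 2*j" for s
    unfolding F_def using dixon_term_of_nat[OF that] assms by simp
  have "real r * cross_diff n r (2*j) = (\<Sum>s\<le>2*j. (real n - real s - real r) * F s)"
    unfolding cross_diff_def sum_distrib_left
  proof (rule sum.cong[OF refl])
    fix s assume "s \<in> {..2*j}"
    then have s: "s \<le> 2*j" by simp
    have "real r * real ((n-1-s) choose r) = (real (n-1-s) - real (r-1)) * real ((n-1-s) choose (r-1))"
      using of_nat_choose_Suc_absorb[of "r-1" "n-1-s"] assms by simp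
    also have "real (n-1-s) - real (r-1) = real n - real s - real r"
      using s assms by (simp add: of_nat_diff)
    finally show "real r * ((-1)^(2*j-s) * real (2*j choose s) * real ((n-1-s) choose r) * real ((n-1-2*j+s) choose (r-1)))
        = (real n - real s - real r) * F s"
      unfolding F[OF s] minus_one_power_diff[OF s] by (simp add: mult_ac)
  qed
  also have "\<dots> = (real n - real j - real r) * (\<Sum>s\<le>2*j. F s) + (\<Sum>s\<le>2*j. (real j - real s) * F s)"
    by (simp add: sum_distrib_left sum.distrib[symmetric] algebra_simps)
  also have "(\<Sum>s\<le>2*j. (real j - real s) * F s) = 0"
  proof (rule sum_atMost_reflect_neg_eq_0)
    fix s assume s: "s \<le> 2*j"
    have "F (2*j - s) = F s"
      using s assms unfolding F[OF s] F[of "2*j-s", OF diff_le_self] minus_one_power_diff[OF s]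
      by (simp add: binomial_symmetric[OF s, symmetric] add.commute)
    then show "(real j - real (2*j - s)) * F (2*j - s) = - ((real j - real s) * F s)"
      using s by (simp add: of_nat_diff algebra_simps)
  qed
  finally show ?thesis
    unfolding dixon_sum_def F_def by simp
qed

lemma dixon_sum_Suc_eq_double:
  assumes "2*j + 2 \<le> n"
  shows "dixon_sum n r (Suc j) = 2 * (\<Sum>s\<le>2*j+1. (-1)^s * real (2*j+1 choose s)
      * real ((n-s) choose r) * real ((n-2*j-2+s) choose r))"
proof -
  define X where "X s = real ((n-s) choose r) * real ((n-2*j-2+s) choose r)" for s
  define T where "T = (\<Sum>s\<le>2*j+1. real (2*j+1 choose s) * ((-1)^s * X s))"
  have "dixon_sum n r (Suc j) = (\<Sum>s\<le>Suc (2*j+1). real (Suc (2*j+1) choose s) * ((-1)^s * X s))"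
    unfolding dixon_sum_def
  proof (rule sum.cong)
    fix s assume "s \<in> {..Suc (2*j+1)}"
    then have "s \<le> 2 * Suc j" by simp
    from dixon_term_of_nat[OF this] assms
    show "dixon_term n r (Suc j) s = real (Suc (2*j+1) choose s) * ((-1)^s * X s)"
      unfolding X_def by (simp add: mult_ac)
  qed simp
  also have "\<dots> = T - (\<Sum>s\<le>2*j+1. real (2*j+1 choose s) * ((-1)^s * X (Suc s)))"
    unfolding sum_atMost_Suc_choose_pascal T_def sum_subtractf[symmetric]
    by (rule sum.cong[OF refl]) (simp add: algebra_simps)
  also have "(\<Sum>s\<le>2*j+1. real (2*j+1 choose s) * ((-1)^s * X (Suc s))) = - T"
  proof -
    have "(\<Sum>s\<le>2*j+1. real (2*j+1 choose s) * ((-1)^s * X (Suc s)))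
        = (\<Sum>s\<le>2*j+1. - (real (2*j+1 choose s) * ((-1)^s * X s)))"
    proof (rule sum_atMost_reflect_cong)
      fix s assume s: "s \<le> 2*j+1"
      have "n - Suc (2*j+1-s) = n-2*j-2+s" "n-2*j-2 + Suc (2*j+1-s) = n - s"
        using s assms by auto
      then have "X (Suc (2*j+1-s)) = X s"
        unfolding X_def by (simp only: mult.commute)
      then show "real (2*j+1 choose (2*j+1-s)) * ((-1)^(2*j+1-s) * X (Suc (2*j+1-s)))
          = - (real (2*j+1 choose s) * ((-1)^s * X s))"
        unfolding minus_one_power_diff[OF s] binomial_symmetric[OF s, symmetric] by simp
    qed
    then show ?thesis
      unfolding T_def by (simp add: sum_negf)
  qed
  finally show ?thesis
    unfolding T_def X_def by (simp add: mult_ac)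
qed

lemma cross_diff_odd:
  assumes "2*j + 3 \<le> n" "r \<ge> 1"
  shows "2 * cross_diff n r (2*j+1) = dixon_sum n r (Suc j)"
proof -
  define N where "N = n - 2*j - 2"
  define U where "U q = (\<Sum>s\<le>2*j+1. (-1)^s * real (2*j+1 choose s)
      * real ((n-1-s) choose q) * real ((N+s) choose r))" for q
  have pascal: "(n-s) choose r = ((n-1-s) choose r) + ((n-1-s) choose (r-1))" if "s \<le> 2*j+1" for s
  proof -
    obtain r0 where r0: "r = Suc r0"
      using assms(2) by (cases r) auto
    have "n - s = Suc (n-1-s)"
      using that assms by auto
    then show ?thesis
      unfolding r0 by simp
  qed
  have "dixon_sum n r (Suc j) = 2 * (\<Sum>s\<le>2*j+1. (-1)^s * real (2*j+1 choose s)
      * real ((n-s) choose r) * real ((n-2*j-2+s) choose r))"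
    by (rule dixon_sum_Suc_eq_double) (use assms in simp)
  also have "(\<Sum>s\<le>2*j+1. (-1)^s * real (2*j+1 choose s)
      * real ((n-s) choose r) * real ((n-2*j-2+s) choose r)) = U r + U (r-1)"
    unfolding U_def N_def sum.distrib[symmetric]
    by (rule sum.cong[OF refl]) (simp add: pascal algebra_simps)
  finally have "dixon_sum n r (Suc j) = 2 * (U r + U (r-1))" .
  moreover have "U r = 0"
    unfolding U_def
  proof (rule sum_atMost_reflect_neg_eq_0)
    fix s assume s: "s \<le> 2*j+1"
    have "n-1-(2*j+1-s) = N + s" "N + (2*j+1-s) = n-1-s"
      unfolding N_def using s assms by auto
    then show "(-1)^(2*j+1-s) * real (2*j+1 choose (2*j+1-s)) * real ((n-1-(2*j+1-s)) choose r) * real ((N+(2*j+1-s)) choose r)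
        = - ((-1)^s * real (2*j+1 choose s) * real ((n-1-s) choose r) * real ((N+s) choose r))"
      unfolding minus_one_power_diff[OF s] binomial_symmetric[OF s, symmetric] by simp
  qed
  moreover have "U (r-1) = cross_diff n r (2*j+1)"
    unfolding U_def cross_diff_def
  proof (rule sum_atMost_reflect_cong)
    fix s assume s: "s \<le> 2*j+1"
    have "n-1-(2*j+1-s) = N + s" "N + (2*j+1-s) = n-1-s" "n-1-(2*j+1)+s = N + s"
      unfolding N_def using s assms by auto
    then show "(-1)^(2*j+1-s) * real (2*j+1 choose (2*j+1-s)) * real ((n-1-(2*j+1-s)) choose (r-1)) * real ((N+(2*j+1-s)) choose r)
        = (-1)^(2*j+1-s) * real (2*j+1 choose s) * real ((n-1-s) choose r) * real ((n-1-(2*j+1)+s) choose (r-1))"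
      unfolding binomial_symmetric[OF s, symmetric] by simp
  qed
  ultimately show ?thesis
    by simp
qed

text \<open>The right-hand summand divided by \<open>C(k, 2j)\<close>, using \<open>C(k,j) C(k-j,j) = C(k,2j) C(2j,j)\<close>. The guard stands for
  the binomial coefficient with negative lower index \<open>r - j - 1\<close>, which truncated subtraction
  would turn into \<open>C(_, 0) = 1\<close>.\<close>

definition central_term :: "nat \<Rightarrow> nat \<Rightarrow> nat \<Rightarrow> real" where
  "central_term n r j = (-1)^j * real (2*j choose j) * real ((n-j-2) choose (r-1))
     * (if j+1 \<le> r then real ((n-j-1) choose (r-j-1)) else 0) / real ((n-j-2) choose j)"

lemma central_term_fact:
  "central_term (2*j+2+p+q) (j+1+p) j = (-1)^j * fact (2*j) * fact (p+q) * fact (j+1+p+q)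
     / (fact j * fact p * fact q * fact (j+p) * fact (j+1+q))"
proof -
  have idx: "2*j+2+p+q-j-2 = j+p+q" "2*j+2+p+q-j-1 = j+1+p+q" "j+1+p-j-1 = p" "j+1+p-1 = j+p"
    by simp_all
  have binom: "real (2*j choose j) = fact (2*j) / (fact j * fact j)"
    "real ((j+p+q) choose (j+p)) = fact (j+p+q) / (fact (j+p) * fact q)"
    "real ((j+1+p+q) choose p) = fact (j+1+p+q) / (fact p * fact (j+1+q))"
    "real ((j+p+q) choose j) = fact (j+p+q) / (fact j * fact (p+q))"
    using binomial_fact[of j "2*j", where 'a=real] binomial_fact[of "j+p" "j+p+q", where 'a=real]
      binomial_fact[of p "j+1+p+q", where 'a=real] binomial_fact[of j "j+p+q", where 'a=real]
    by (simp_all add: algebra_simps)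
  show ?thesis
    unfolding central_term_def idx binom by (simp add: field_simps del: fact_Suc)
qed

lemma central_term_eq_0:
  assumes "\<not> (j+1 \<le> r \<and> j+r+1 \<le> n)" "2*j+2 \<le> n"
  shows "central_term n r j = 0"
proof (cases "j+1 \<le> r")
  case True
  with assms have "n-j-2 < r-1"
    by auto
  then show ?thesis
    unfolding central_term_def by simp
qed (simp add: central_term_def)

lemma cross_diff_even_central:
  assumes "2*j+2 \<le> n" "r \<ge> 1"
  shows "real r * cross_diff n r (2*j) = (real n - 1 - 2*real j) * central_term n r j"
proof -
  have "real r * cross_diff n r (2*j) = (real n - real j - real r) * dixon_closed (n-1) (r-1) j"
    using cross_diff_even[OF assms] dixon_sum_closed_form[of j "n-1" "r-1"] assms by simp
  also have "\<dots> = (real n - 1 - 2*real j) * central_term n r j"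
  proof (cases "j+1 \<le> r \<and> j+r+1 \<le> n")
    case True
    define p q where "p = r - j - 1" and "q = n - j - r - 1"
    with True have n: "n = 2*j+2+p+q" and r: "r = j+1+p"
      by simp_all
    show ?thesis
      unfolding n r central_term_fact dixon_closed_def using of_nat_0_le_iff[of p] of_nat_0_le_iff[of q]
      by (simp add: field_simps add_nonneg_eq_0_iff)
  next
    case False
    then have "j + r = n \<or> dixon_closed (n-1) (r-1) j = 0"
      unfolding dixon_closed_def using assms by auto
    then show ?thesis
      using central_term_eq_0[OF False assms(1)] by auto
  qed
  finally show ?thesis .
qed

lemma cross_diff_odd_central:
  assumes "2*j+3 \<le> n" "r \<ge> 1"
  shows "real r * cross_diff n r (2*j+1) = - (2*real j+1) * central_term n r j"
proof -
  have "real r * cross_diff n r (2*j+1) = real r * dixon_closed n r (Suc j) / 2"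
    using cross_diff_odd[OF assms] dixon_sum_closed_form[of "Suc j" n r] assms by simp
  also have "\<dots> = - (2*real j+1) * central_term n r j"
  proof (cases "j+1 \<le> r \<and> j+r+1 \<le> n")
    case True
    define p q where "p = r - j - 1" and "q = n - j - r - 1"
    with True have n: "n = 2*j+2+p+q" and r: "r = j+1+p"
      by simp_all
    show ?thesis
      unfolding n r central_term_fact dixon_closed_def using of_nat_0_le_iff[of p] of_nat_0_le_iff[of j]
      by (simp add: field_simps add_nonneg_eq_0_iff)
  next
    case False
    then have "dixon_closed n r (Suc j) = 0"
      unfolding dixon_closed_def by auto
    then show ?thesis
      using central_term_eq_0[OF False] assms by simp
  qed
  finally show ?thesis .
qed

lemma choose_alternating_diff_sum:
  assumes "k \<le> L"
  shows "(\<Sum>u\<le>k. (-1)^u * real (k choose u) * real ((L-u) choose q))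
       = (if k \<le> q then real ((L-k) choose (q-k)) else 0)"
  using assms
proof (induction k arbitrary: L)
  case 0
  then show ?case by simp
next
  case (Suc k)
  define f where "f u = (-1)^u * real ((L-u) choose q)" for u
  have "(\<Sum>u\<le>Suc k. (-1)^u * real (Suc k choose u) * real ((L-u) choose q))
      = (\<Sum>u\<le>Suc k. real (Suc k choose u) * f u)"
    unfolding f_def by (simp add: mult_ac)
  also have "\<dots> = (\<Sum>u\<le>k. real (k choose u) * (f u + f (Suc u)))"
    by (rule sum_atMost_Suc_choose_pascal)
  also have "\<dots> = (\<Sum>u\<le>k. (-1)^u * real (k choose u) * real ((L-u) choose q))
      - (\<Sum>u\<le>k. (-1)^u * real (k choose u) * real ((L-1-u) choose q))"
    unfolding sum_subtractf[symmetric] f_def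
    by (rule sum.cong[OF refl]) (simp add: algebra_simps)
  also have "\<dots> = (if k \<le> q then real ((L-k) choose (q-k)) else 0)
      - (if k \<le> q then real ((L-1-k) choose (q-k)) else 0)"
    using Suc.IH[of L] Suc.IH[of "L-1"] Suc.prems by simp
  also have "\<dots> = (if Suc k \<le> q then real ((L - Suc k) choose (q - Suc k)) else 0)"
  proof (cases "k < q")
    case True
    have "L - k = Suc (L - Suc k)" "q - k = Suc (q - Suc k)" "L - 1 - k = L - Suc k"
      using Suc.prems True by simp_all
    then show ?thesis
      using True by simp
  qed auto
  finally show ?case .
qed

lemma cross_diff_binomial_transform:
  assumes "k + 2 \<le> n" "1 \<le> r" "r \<le> n"
  shows "(\<Sum>t\<le>k. real (k choose t) * cross_diff n r t)
       = (\<Sum>s\<le>k. real (k choose s) * real ((n-1-s) choose r)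
            * (if k - s \<le> r - 1 then real ((n-1-(k-s)) choose (r-1-(k-s))) else 0))"
proof -
  define g where "g s u = real (k choose (s+u)) * (-1)^u * real ((s+u) choose s)
      * real ((n-1-s) choose r) * real ((n-1-u) choose (r-1))" for s u
  have "(\<Sum>t\<le>k. real (k choose t) * cross_diff n r t) = (\<Sum>t\<le>k. \<Sum>s\<le>t. g s (t - s))"
    unfolding cross_diff_def sum_distrib_left
  proof (intro sum.cong refl)
    fix t s assume "t \<in> {..k}" "s \<in> {..t}"
    then have "s + (t - s) = t" "n-1-t+s = n-1-(t-s)"
      using assms by auto
    then show "real (k choose t) * ((-1)^(t-s) * real (t choose s) * real ((n-1-s) choose r)
        * real ((n-1-t+s) choose (r-1))) = g s (t - s)"
      unfolding g_def by (simp add: mult_ac)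
  qed
  also have "\<dots> = (\<Sum>(s,u)\<in>{(s,u). s+u \<le> k}. g s u)"
    by (rule sum.triangle_reindex_eq[symmetric])
  also have "\<dots> = (\<Sum>s\<le>k. \<Sum>u\<le>k-s. g s u)"
    by (simp add: pairs_le_eq_Sigma sum.Sigma)
  also have "\<dots> = (\<Sum>s\<le>k. \<Sum>u\<le>k-s. real (k choose s) * real ((n-1-s) choose r)
      * ((-1)^u * real ((k-s) choose u) * real ((n-1-u) choose (r-1))))"
  proof (intro sum.cong refl)
    fix s u assume "s \<in> {..k}" "u \<in> {..k-s}"
    then have "(k choose (s+u)) * ((s+u) choose s) = (k choose s) * ((k-s) choose u)"
      using choose_mult[of s "s+u" k] by simp
    then have "real (k choose (s+u)) * real ((s+u) choose s) = real (k choose s) * real ((k-s) choose u)"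
      by (metis of_nat_mult)
    then show "g s u = real (k choose s) * real ((n-1-s) choose r)
        * ((-1)^u * real ((k-s) choose u) * real ((n-1-u) choose (r-1)))"
      unfolding g_def by (simp add: algebra_simps)
  qed
  also have "\<dots> = (\<Sum>s\<le>k. real (k choose s) * real ((n-1-s) choose r)
      * (\<Sum>u\<le>k-s. (-1)^u * real ((k-s) choose u) * real ((n-1-u) choose (r-1))))"
    by (simp add: sum_distrib_left)
  also have "\<dots> = (\<Sum>s\<le>k. real (k choose s) * real ((n-1-s) choose r)
      * (if k - s \<le> r - 1 then real ((n-1-(k-s)) choose (r-1-(k-s))) else 0))"
  proof (intro sum.cong refl)
    fix s assume "s \<in> {..k}"
    then have "k - s \<le> n - 1"
      using assms by auto
    then show "real (k choose s) * real ((n-1-s) choose r)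
          * (\<Sum>u\<le>k-s. (-1)^u * real ((k-s) choose u) * real ((n-1-u) choose (r-1)))
        = real (k choose s) * real ((n-1-s) choose r)
          * (if k - s \<le> r - 1 then real ((n-1-(k-s)) choose (r-1-(k-s))) else 0)"
      by (simp only: choose_alternating_diff_sum)
  qed
  finally show ?thesis .
qed

lemma choose_triple_sum_eq_cross_diff_sum:
  assumes "k + 2 \<le> n" "1 \<le> r" "r \<le> n"
  shows "(\<Sum>i\<le>k. real (k choose i) * real ((n-1-k+i) choose r) * real ((n-1-i) choose (n-r)))
       = (\<Sum>t\<le>k. real (k choose t) * cross_diff n r t)"
  unfolding cross_diff_binomial_transform[OF assms]
proof (rule sum_atMost_reflect_cong)
  fix s assume s: "s \<le> k"
  have idx: "n-1-k+(k-s) = n-1-s" "n-1-(k-s) = n-1-k+s"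
    using s assms by auto
  have "real ((n-1-k+s) choose (n-r))
      = (if k - s \<le> r - 1 then real ((n-1-(k-s)) choose (r-1-(k-s))) else 0)"
  proof (cases "k - s \<le> r - 1")
    case True
    then have "n - r \<le> n-1-k+s" "(n-1-k+s) - (n-r) = r-1-(k-s)"
      using assms s by auto
    then show ?thesis
      using True binomial_symmetric[of "n-r" "n-1-k+s"] idx by simp
  next
    case False
    then have "n-1-k+s < n - r"
      using assms s by auto
    then show ?thesis
      using False by simp
  qed
  then show "real (k choose (k-s)) * real ((n-1-k+(k-s)) choose r) * real ((n-1-(k-s)) choose (n-r))
      = real (k choose s) * real ((n-1-s) choose r)
        * (if k - s \<le> r - 1 then real ((n-1-(k-s)) choose (r-1-(k-s))) else 0)"
    unfolding idx binomial_symmetric[OF s, symmetric] by simp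
qed

lemma cross_diff_sum_pairing:
  assumes "k + 2 \<le> n" "1 \<le> r"
  shows "real r * (\<Sum>t\<le>k. real (k choose t) * cross_diff n r t)
       = (real n - 1 - real k) * (\<Sum>j\<le>k div 2. real (k choose (2*j)) * central_term n r j)"
proof -
  define h where "h t = real (k choose t) * cross_diff n r t" for t
  have "(\<Sum>t\<le>k. h t) = (\<Sum>t\<le>Suc (2*(k div 2)). h t)"
  proof (cases "even k")
    case True
    then have "Suc (2*(k div 2)) = Suc k"
      by simp
    then show ?thesis
      unfolding h_def by simp
  next
    case False
    then have "Suc (2*(k div 2)) = k"
      by presburger
    then show ?thesis
      by simp
  qed
  also have "\<dots> = (\<Sum>j\<le>k div 2. h (2*j) + h (Suc (2*j)))"
    by (rule sum.in_pairs_0)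
  finally have "real r * (\<Sum>t\<le>k. h t) = (\<Sum>j\<le>k div 2. real r * h (2*j) + real r * h (Suc (2*j)))"
    by (simp add: sum_distrib_left distrib_left)
  also have "\<dots> = (\<Sum>j\<le>k div 2. (real n - 1 - real k) * (real (k choose (2*j)) * central_term n r j))"
  proof (rule sum.cong[OF refl])
    fix j assume "j \<in> {..k div 2}"
    then have j: "2*j \<le> k"
      by simp
    have even: "real r * h (2*j) = (real n - 1 - 2*real j) * real (k choose (2*j)) * central_term n r j"
      unfolding h_def using cross_diff_even_central[of j n r] j assms by (simp add: mult_ac)
    have odd: "real r * h (Suc (2*j)) = - (real k - 2*real j) * real (k choose (2*j)) * central_term n r j"
    proof (cases "Suc (2*j) \<le> k")
      case True
      have rc: "real r * cross_diff n r (2*j+1) = - (2*real j+1) * central_term n r j"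
        using True assms by (intro cross_diff_odd_central) simp_all
      have "real r * h (Suc (2*j)) = real (k choose Suc (2*j)) * (real r * cross_diff n r (2*j+1))"
        unfolding h_def by simp
      also have "\<dots> = - (real (Suc (2*j)) * real (k choose Suc (2*j))) * central_term n r j"
        unfolding rc by (simp add: algebra_simps)
      finally show ?thesis
        unfolding of_nat_choose_Suc_absorb by (simp add: algebra_simps)
    next
      case False
      then have "k = 2*j"
        using j by simp
      then show ?thesis
        unfolding h_def by simp
    qed
    show "real r * h (2*j) + real r * h (Suc (2*j)) = (real n - 1 - real k) * (real (k choose (2*j)) * central_term n r j)"
      unfolding even odd by (simp add: algebra_simps)
  qed
  finally show ?thesis
    unfolding h_def by (simp add: sum_distrib_left)
qed

lemma ibinom_of_nat [simp]: "ibinom (int a) (int b) = real (a choose b)"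
  unfolding ibinom_def by simp

lemma choose_mult_double: "2*j \<le> k \<Longrightarrow> (k choose j) * ((k-j) choose j) = (k choose (2*j)) * ((2*j) choose j)"
  using choose_mult[of j "2*j" k] by (simp add: mult_2)

lemma ibinom_triple_sum_eq_nat:
  assumes "k + 2 \<le> n" "r \<le> n"
  shows "(\<Sum>i\<in>{0..int k}. ibinom (int k) i * ibinom (int n - int k + i - 1) (int r) * ibinom (int n - i - 1) (int n - int r))
       = (\<Sum>i\<le>k. real (k choose i) * real ((n-1-k+i) choose r) * real ((n-1-i) choose (n-r)))"
proof -
  have range: "{0..int k} = int ` {..k}"
    by (simp add: atMost_atLeast0 image_int_atLeastAtMost)
  show ?thesis
    unfolding range sum.reindex[OF inj_on_of_nat] comp_def
  proof (intro sum.cong refl)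
    fix i assume "i \<in> {..k}"
    then have "int n - int k + int i - 1 = int (n-1-k+i)" "int n - int i - 1 = int (n-1-i)"
      "int n - int r = int (n-r)"
      using assms by auto
    then show "ibinom (int k) (int i) * ibinom (int n - int k + int i - 1) (int r) * ibinom (int n - int i - 1) (int n - int r)
        = real (k choose i) * real ((n-1-k+i) choose r) * real ((n-1-i) choose (n-r))"
      by (simp only: ibinom_of_nat)
  qed
qed

lemma ibinom_central_sum_eq_nat:
  assumes "k + 2 \<le> n" "1 \<le> r"
  shows "(\<Sum>j\<in>{j. 0 \<le> j \<and> 2 * j \<le> int k}. (-1) ^ nat j *
            (ibinom (int k) j * ibinom (int k - j) j * ibinom (int n - j - 2) (int r - 1) * ibinom (int n - j - 1) (int r - j - 1))
            / ibinom (int n - j - 2) j)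
       = (\<Sum>j\<le>k div 2. real (k choose (2*j)) * central_term n r j)"
proof -
  have "{j. 0 \<le> j \<and> 2 * j \<le> int k} = int ` {..k div 2}"
    by (auto simp: atMost_atLeast0 image_int_atLeastAtMost zdiv_int)
  moreover have "(-1) ^ nat (int j) *
        (ibinom (int k) (int j) * ibinom (int k - int j) (int j) * ibinom (int n - int j - 2) (int r - 1)
          * ibinom (int n - int j - 1) (int r - int j - 1)) / ibinom (int n - int j - 2) (int j)
      = real (k choose (2*j)) * central_term n r j" if "2*j \<le> k" for j
  proof -
    have idx: "int k - int j = int (k-j)" "int n - int j - 2 = int (n-j-2)" "int r - 1 = int (r-1)"
      "int n - int j - 1 = int (n-j-1)"
      using that assms by auto
    have "ibinom (int (n-j-1)) (int r - int j - 1) = (if j+1 \<le> r then real ((n-j-1) choose (r-j-1)) else 0)"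
    proof (cases "j+1 \<le> r")
      case True
      then have "int r - int j - 1 = int (r-j-1)"
        by auto
      then show ?thesis
        using True by (simp only: ibinom_of_nat if_True)
    qed (simp add: ibinom_def)
    then show ?thesis
      unfolding idx ibinom_of_nat nat_int central_term_def
      using arg_cong[OF choose_mult_double[OF that], of real] by (simp add: mult_ac)
  qed
  ultimately show ?thesis
    by (simp add: sum.reindex)
qed

lemma choose_triple_sum_identity:
  assumes "k + 2 \<le> n" "1 \<le> r" "r \<le> n"
  shows "real r * (\<Sum>i\<le>k. real (k choose i) * real ((n-1-k+i) choose r) * real ((n-1-i) choose (n-r)))
       = (real n - 1 - real k) * (\<Sum>j\<le>k div 2. real (k choose (2*j)) * central_term n r j)"
  using choose_triple_sum_eq_cross_diff_sum[OF assms] cross_diff_sum_pairing[OF assms(1,2)] by simp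

theorem theorem1:
  fixes n k r :: int
  assumes "0 \<le> k" and "k \<le> n - 2" and "1 \<le> r" and "r \<le> n"
  shows "real_of_int (k + 1) / real_of_int (n - k - 1) *
           (\<Sum>i\<in>{0..k}. ibinom k i * ibinom (n - k + i - 1) r * ibinom (n - i - 1) (n - r))
       = real_of_int (k + 1) / real_of_int r *
           (\<Sum>j\<in>{j. 0 \<le> j \<and> 2 * j \<le> k}. (-1) ^ nat j *
              (ibinom k j * ibinom (k - j) j * ibinom (n - j - 2) (r - 1) * ibinom (n - j - 1) (r - j - 1))
              / ibinom (n - j - 2) j)"
proof -
  obtain K N R where k: "k = int K" and n: "n = int N" and r: "r = int R"
    using assms by (metis nonneg_int_cases order.trans zero_le_one)
  have KNR: "K + 2 \<le> N" "1 \<le> R" "R \<le> N"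
    using assms unfolding k n r by auto
  define S where "S = (\<Sum>i\<le>K. real (K choose i) * real ((N-1-K+i) choose R) * real ((N-1-i) choose (N-R)))"
  define T where "T = (\<Sum>j\<le>K div 2. real (K choose (2*j)) * central_term N R j)"
  have "(\<Sum>i\<in>{0..k}. ibinom k i * ibinom (n - k + i - 1) r * ibinom (n - i - 1) (n - r)) = S"
    unfolding k n r S_def by (rule ibinom_triple_sum_eq_nat[OF KNR(1,3)])
  moreover have "(\<Sum>j\<in>{j. 0 \<le> j \<and> 2 * j \<le> k}. (-1) ^ nat j *
      (ibinom k j * ibinom (k - j) j * ibinom (n - j - 2) (r - 1) * ibinom (n - j - 1) (r - j - 1))
      / ibinom (n - j - 2) j) = T"
    unfolding k n r T_def by (rule ibinom_central_sum_eq_nat[OF KNR(1,2)])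
  moreover have "S = (real N - real K - 1) / real R * T"
    using choose_triple_sum_identity[OF KNR] KNR unfolding S_def T_def by (simp add: field_simps)
  moreover have "real N - real K - 1 \<noteq> 0"
    using KNR by simp
  ultimately show ?thesis
    unfolding k n r by simp
qed

end
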